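(* Let $k\ge 1$ be an integer and $\beta,\gamma>0$, and put $R_0=\beta/\gamma$. For $\boldsymbol{y}=(y_1,\dots,y_k)\in\mathbb{R}^k$ and $\boldsymbol{\theta}=(\theta_1,\dots,\theta_k)\in\mathbb{R}^k$ define $$H_k(\boldsymbol{y},\boldsymbol{\theta})=\beta\Big(\sum_{m=1}^k y_m\Big)\Big(1-\sum_{m=1}^k y_m\Big)\big(e^{\theta_1}-1\big)+k\gamma\sum_{m=1}^{k-1}y_m\big(e^{-\theta_m+\theta_{m+1}}-1\big)+k\gamma\,y_k\big(e^{-\theta_k}-1\big),$$ and $$S_k(\boldsymbol{\theta})=\ln\Big(\frac{1}{k}\sum_{m=1}^k e^{\theta_m}\Big)-\frac{\gamma}{\beta}\Big(1-\frac{k}{\sum_{m=1}^k e^{\theta_m}}\Big).$$ Let $z^*$ be the unique positive real number with $\sum_{m=1}^k (z^* )^m=k\gamma/\beta$, let $\theta_k^*=\ln z^*$, and let $\boldsymbol{\theta}^*=(k,k-1,\dots,2,1)\,\theta_k^*\in\mathbb{R}^k$. Then: (i) for every $\boldsymbol{\theta}\in\mathbb{R}^k$, $H_k\big(\nabla S_k(\boldsymbol{\theta}),\boldsymbol{\theta}\big)=0$, where $\nabla S_k=(\partial S_k/\partial\theta_1,\dots,\partial S_k/\partial\theta_k)$; (ii) $S_k(\mathbf{0})=0$; (iii) $S_k(\boldsymbol{\theta}^* )=1-\frac{1}{R_0}-\ln R_0$.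
   Context: $H_k$ is the Hamiltonian associated with the SIS infection model with $k$ infectious stages (Erlang-distributed infectious periods), where $y_m$ is the scaled number of individuals in infectious stage $m$ and $\theta_m$ is the conjugate momentum variable. *)

theory Defs
  imports "HOL-Analysis.Analysis"
begin

text \<open>Vectors in R^k are represented as functions nat => real, using the
 components 1..k only.\<close>

definition H :: "nat \<Rightarrow> real \<Rightarrow> real \<Rightarrow> (nat \<Rightarrow> real) \<Rightarrow> (nat \<Rightarrow> real) \<Rightarrow> real" where
  "H k \<beta> \<gamma> y \<theta> =
     \<beta> * (\<Sum>m=1..k. y m) * (1 - (\<Sum>m=1..k. y m)) * (exp (\<theta> 1) - 1)
     + real k * \<gamma> * (\<Sum>m=1..k-1. y m * (exp (- \<theta> m + \<theta> (m+1)) - 1))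
     + real k * \<gamma> * y k * (exp (- \<theta> k) - 1)"

definition S :: "nat \<Rightarrow> real \<Rightarrow> real \<Rightarrow> (nat \<Rightarrow> real) \<Rightarrow> real" where
  "S k \<beta> \<gamma> \<theta> =
     ln ((1 / real k) * (\<Sum>m=1..k. exp (\<theta> m)))
     - \<gamma> / \<beta> * (1 - real k / (\<Sum>m=1..k. exp (\<theta> m)))"

definition gradS :: "nat \<Rightarrow> real \<Rightarrow> real \<Rightarrow> (nat \<Rightarrow> real) \<Rightarrow> (nat \<Rightarrow> real)" where
  "gradS k \<beta> \<gamma> \<theta> = (\<lambda>m. deriv (\<lambda>t. S k \<beta> \<gamma> (\<theta>(m := t))) (\<theta> m))"

end

theory Submission
  imports Defs
begin

text \<open>Writing \<open>E = \<Sum>\<^sub>m e\<^sup>\<theta>\<^sup>m\<close>, the gradient of \<open>S\<^sub>k\<close> is \<open>c e\<^sup>\<theta>\<close> with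
  \<open>c = (1 - k\<gamma>/(\<beta>E))/E\<close>. For any \<open>y = c e\<^sup>\<theta>\<close> the migration terms of \<open>H\<^sub>k\<close> telescope to
  \<open>k\<gamma>c(1 - e\<^sup>\<theta>\<^sup>1)\<close>, so \<open>H\<^sub>k = (\<beta>cE(1 - cE) - k\<gamma>c)(e\<^sup>\<theta>\<^sup>1 - 1)\<close>, and this particular \<open>c\<close>
  makes the bracket vanish. At \<open>\<theta>\<^sup>*\<close> the sum \<open>E\<close> is \<open>\<Sum>\<^sub>m (z\<^sup>*)\<^sup>m = k\<gamma>/\<beta>\<close>, which gives
  the value of \<open>S\<^sub>k(\<theta>\<^sup>*)\<close> directly.\<close>

lemma sum_comp_fun_upd:
  fixes f :: "'b \<Rightarrow> 'c::ab_group_add"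
  assumes "finite A" and "m \<in> A"
  shows "(\<Sum>j\<in>A. f ((\<theta>(m := t)) j)) = f t + ((\<Sum>j\<in>A. f (\<theta> j)) - f (\<theta> m))"
proof -
  have "(\<Sum>j\<in>A. f ((\<theta>(m := t)) j)) = f t + (\<Sum>j\<in>A - {m}. f ((\<theta>(m := t)) j))"
    using assms by (simp add: sum.remove)
  also have "(\<Sum>j\<in>A - {m}. f ((\<theta>(m := t)) j)) = (\<Sum>j\<in>A - {m}. f (\<theta> j))"
    by (rule sum.cong) auto
  finally show ?thesis
    using assms by (simp add: sum_diff1)
qed

lemma sum_exp_pos:
  fixes \<theta> :: "nat \<Rightarrow> real"
  assumes "k \<ge> 1"
  shows "(\<Sum>j=1..k. exp (\<theta> j)) > 0"
  using assms by (intro sum_pos) auto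

lemma gradS_eq:
  fixes \<theta> :: "nat \<Rightarrow> real"
  assumes "m \<in> {1..k}" and "\<beta> > 0"
  shows "gradS k \<beta> \<gamma> \<theta> m
    = (1 - real k * \<gamma> / (\<beta> * (\<Sum>j=1..k. exp (\<theta> j)))) / (\<Sum>j=1..k. exp (\<theta> j)) * exp (\<theta> m)"
proof -
  define E where "E = (\<Sum>j=1..k. exp (\<theta> j))"
  define A where "A = E - exp (\<theta> m)"
  have "A \<ge> 0"
    using assms(1) unfolding A_def E_def
    by (simp add: member_le_sum[of m _ "\<lambda>j. exp (\<theta> j)"])
  then have E_pos: "exp (\<theta> m) + A > 0"
    by (simp add: add_pos_nonneg)
  have k_pos: "real k > 0"
    using assms(1) by simp
  have S_upd: "(\<lambda>t. S k \<beta> \<gamma> (\<theta>(m := t)))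
      = (\<lambda>t. ln ((1 / real k) * (exp t + A)) - \<gamma> / \<beta> * (1 - real k / (exp t + A)))"
    unfolding S_def A_def E_def
    by (simp only: sum_comp_fun_upd[OF finite_atLeastAtMost assms(1), of exp])
  have "((\<lambda>t. ln ((1 / real k) * (exp t + A)) - \<gamma> / \<beta> * (1 - real k / (exp t + A)))
      has_real_derivative
        (1 / real k * exp (\<theta> m)) / (1 / real k * (exp (\<theta> m) + A))
        - \<gamma> / \<beta> * (- (- (real k * exp (\<theta> m)) / (exp (\<theta> m) + A)\<^sup>2))) (at (\<theta> m))"
    using E_pos k_pos assms(2)
    by (auto intro!: derivative_eq_intros simp: power2_eq_square ac_simps)
  then have "gradS k \<beta> \<gamma> \<theta> m
      = (1 / real k * exp (\<theta> m)) / (1 / real k * E)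
        - \<gamma> / \<beta> * (- (- (real k * exp (\<theta> m)) / E\<^sup>2))"
    unfolding gradS_def S_upd by (simp add: DERIV_imp_deriv A_def)
  then show ?thesis
    using k_pos E_pos assms(2) unfolding E_def[symmetric] A_def
    by (simp add: field_simps power2_eq_square)
qed

lemma H_cong:
  assumes "\<And>m. m \<in> {1..k} \<Longrightarrow> y m = y' m"
  shows "H k \<beta> \<gamma> y \<theta> = H k \<beta> \<gamma> y' \<theta>"
proof (cases "k = 0")
  case True
  then show ?thesis by (simp add: H_def)
next
  case False
  then have "(\<Sum>m=1..k-1. y m * (exp (- \<theta> m + \<theta> (m+1)) - 1))
      = (\<Sum>m=1..k-1. y' m * (exp (- \<theta> m + \<theta> (m+1)) - 1))"
    using assms by (intro sum.cong) auto
  with False assms show ?thesis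
    unfolding H_def by (simp add: sum.cong[OF refl assms])
qed

lemma H_scaled_exp:
  fixes \<theta> :: "nat \<Rightarrow> real"
  assumes "k \<ge> 1"
  shows "H k \<beta> \<gamma> (\<lambda>m. c * exp (\<theta> m)) \<theta>
    = (\<beta> * (c * (\<Sum>m=1..k. exp (\<theta> m))) * (1 - c * (\<Sum>m=1..k. exp (\<theta> m))) - real k * \<gamma> * c)
      * (exp (\<theta> 1) - 1)"
proof -
  have migration: "(\<Sum>m=1..k-1. c * exp (\<theta> m) * (exp (- \<theta> m + \<theta> (m+1)) - 1))
      = c * (exp (\<theta> k) - exp (\<theta> 1))"
  proof -
    have "(\<Sum>m=1..k-1. c * exp (\<theta> m) * (exp (- \<theta> m + \<theta> (m+1)) - 1))
        = c * (\<Sum>m=1..k-1. exp (\<theta> (Suc m)) - exp (\<theta> m))"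
      by (simp add: sum_distrib_left right_diff_distrib mult_exp_exp mult.assoc)
    also have "(\<Sum>m=1..k-1. exp (\<theta> (Suc m)) - exp (\<theta> m)) = exp (\<theta> k) - exp (\<theta> 1)"
      using assms sum_Suc_diff[of 1 "k - 1" "\<lambda>m. exp (\<theta> m)"] by simp
    finally show ?thesis .
  qed
  show ?thesis
    unfolding H_def migration
    by (simp add: sum_distrib_left[symmetric] exp_minus field_simps)
qed

lemma H_gradS_eq_0:
  fixes \<theta> :: "nat \<Rightarrow> real"
  assumes "k \<ge> 1" and "\<beta> > 0"
  shows "H k \<beta> \<gamma> (gradS k \<beta> \<gamma> \<theta>) \<theta> = 0"
proof -
  define E where "E = (\<Sum>m=1..k. exp (\<theta> m))"
  define c where "c = (1 - real k * \<gamma> / (\<beta> * E)) / E"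
  have "E > 0"
    unfolding E_def using assms(1) by (rule sum_exp_pos)
  have "H k \<beta> \<gamma> (gradS k \<beta> \<gamma> \<theta>) \<theta> = H k \<beta> \<gamma> (\<lambda>m. c * exp (\<theta> m)) \<theta>"
    using assms(2) by (intro H_cong) (simp add: gradS_eq c_def E_def)
  also have "\<dots> = (\<beta> * (c * E) * (1 - c * E) - real k * \<gamma> * c) * (exp (\<theta> 1) - 1)"
    unfolding E_def by (rule H_scaled_exp[OF assms(1)])
  also have "\<beta> * (c * E) * (1 - c * E) = real k * \<gamma> * c"
    using \<open>E > 0\<close> assms(2) by (simp add: c_def field_simps)
  finally show ?thesis
    by simp
qed

lemma sum_exp_reversed_ln:
  fixes z :: real
  assumes "z > 0"
  shows "(\<Sum>m=1..k. exp (real (k + 1 - m) * ln z)) = (\<Sum>m=1..k. z ^ m)"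
proof -
  have "exp (real n * ln z) = z ^ n" for n
    using assms by (simp add: exp_of_nat_mult)
  then have "(\<Sum>m=1..k. exp (real (k + 1 - m) * ln z)) = (\<Sum>m=1..k. z ^ (k + 1 - m))"
    by presburger
  also have "\<dots> = (\<Sum>m=1..k. z ^ m)"
    by (rule sum.reindex_bij_witness[where i="\<lambda>m. k + 1 - m" and j="\<lambda>m. k + 1 - m"]) auto
  finally show ?thesis .
qed

theorem mainTheorem1:
  fixes k :: nat and \<beta> \<gamma> z :: real
  assumes "k \<ge> 1" and "\<beta> > 0" and "\<gamma> > 0"
    and "z > 0" and "(\<Sum>m=1..k. z ^ m) = real k * \<gamma> / \<beta>"
  shows "(\<forall>\<theta> :: nat \<Rightarrow> real. H k \<beta> \<gamma> (gradS k \<beta> \<gamma> \<theta>) \<theta> = 0)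
    \<and> S k \<beta> \<gamma> (\<lambda>_. 0) = 0
    \<and> S k \<beta> \<gamma> (\<lambda>m. real (k + 1 - m) * ln z)
        = 1 - 1 / (\<beta> / \<gamma>) - ln (\<beta> / \<gamma>)"
proof (intro conjI allI)
  fix \<theta> :: "nat \<Rightarrow> real"
  show "H k \<beta> \<gamma> (gradS k \<beta> \<gamma> \<theta>) \<theta> = 0"
    using assms(1,2) by (rule H_gradS_eq_0)
next
  show "S k \<beta> \<gamma> (\<lambda>_. 0) = 0"
    using assms(1) by (simp add: S_def)
next
  show "S k \<beta> \<gamma> (\<lambda>m. real (k + 1 - m) * ln z) = 1 - 1 / (\<beta> / \<gamma>) - ln (\<beta> / \<gamma>)"
    using assms(1-3)
    unfolding S_def sum_exp_reversed_ln[OF assms(4)] assms(5)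
    by (simp add: ln_div field_simps)
qed

end
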